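(* Let $X$ be a nonempty set and $f,g:X\to\mathbb{R}$. Then there exists $\lambda\in[0,1]$ such that \[ 0\leq \lambda f(x)+(1-\lambda)g(x)\qquad (x\in X) \] if and only if \[ 0\leq \max\big(t f(x)+(1-t)f(y),\ t g(x)+(1-t)g(y)\big)\qquad (x,y\in X,\ t\in[0,1]). \] *)

theory Defs
  imports Main "HOL.Real"
begin

end

theory Submission
  imports Defs "HOL-Analysis.Analysis"
begin

text \<open>For each point x the weights \<lambda> \<in> [0,1] with \<lambda> f x + (1 - \<lambda>) g x \<ge> 0 form a compact
  interval. The condition on pairs x, y is exactly the statement that two of these intervals
  meet (a 2 \<times> 2 minimax argument), and by Helly's theorem on the line pairwise meeting compact
  intervals have a common point.\<close>

definition nonneg_weights :: "real \<Rightarrow> real \<Rightarrow> real set" where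
  "nonneg_weights a b = {l \<in> {0..1}. 0 \<le> l * a + (1 - l) * b}"

lemma nonneg_weights_eq_halfspace: "nonneg_weights a b = {0..1} \<inter> {l. inner (a - b) l \<ge> - b}"
  by (auto simp: nonneg_weights_def algebra_simps)

lemma compact_nonneg_weights: "compact (nonneg_weights a b)"
  unfolding nonneg_weights_eq_halfspace compact_eq_bounded_closed
  by (intro conjI closed_Int closed_halfspace_ge bounded_Int) auto

lemma is_interval_nonneg_weights: "is_interval (nonneg_weights a b)"
  unfolding nonneg_weights_eq_halfspace is_interval_convex_1
  by (intro convex_Int convex_halfspace_ge convex_real_interval)

lemma Helly_real_intervals:
  fixes S :: "'i \<Rightarrow> real set"
  assumes "I \<noteq> {}"
    and compact: "\<And>i. i \<in> I \<Longrightarrow> compact (S i)"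
    and interval: "\<And>i. i \<in> I \<Longrightarrow> is_interval (S i)"
    and meet: "\<And>i j. i \<in> I \<Longrightarrow> j \<in> I \<Longrightarrow> S i \<inter> S j \<noteq> {}"
  shows "(\<Inter>i\<in>I. S i) \<noteq> {}"
proof -
  have bdd: "bdd_below (S i)" "bdd_above (S i)" if "i \<in> I" for i
    using compact_imp_bounded[OF compact[OF that]]
    by (simp_all add: bounded_imp_bdd_below bounded_imp_bdd_above)
  have Inf_mem: "Inf (S i) \<in> S i" and Sup_mem: "Sup (S i) \<in> S i" if "i \<in> I" for i
    using meet[OF that that] bdd[OF that] compact_imp_closed[OF compact[OF that]]
    by (simp_all add: closed_contains_Inf closed_contains_Sup)
  have Inf_le_Sup: "Inf (S i) \<le> Sup (S j)" if ij: "i \<in> I" "j \<in> I" for i j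
  proof -
    obtain z where "z \<in> S i" "z \<in> S j"
      using meet[OF ij] by blast
    then show ?thesis
      using bdd ij by (meson cInf_lower cSup_upper order_trans)
  qed
  define l where "l = (SUP i\<in>I. Inf (S i))"
  have "l \<in> S j" if j: "j \<in> I" for j
  proof -
    have "Inf (S j) \<le> l"
      unfolding l_def using j Inf_le_Sup by (intro cSUP_upper bdd_aboveI2) auto
    moreover have "l \<le> Sup (S j)"
      unfolding l_def using assms(1) j Inf_le_Sup by (intro cSUP_least) auto
    ultimately show ?thesis
      using interval[OF j] Inf_mem[OF j] Sup_mem[OF j] unfolding is_interval_1 by blast
  qed
  then show ?thesis by blast
qed

lemma nonneg_weights_meet_max_nonneg:
  fixes a b c d t :: real
  assumes "nonneg_weights a b \<inter> nonneg_weights c d \<noteq> {}" and t: "t \<in> {0..1}"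
  shows "0 \<le> max (t * a + (1 - t) * c) (t * b + (1 - t) * d)"
proof -
  obtain l where l: "l \<in> {0..1}" "0 \<le> l * a + (1 - l) * b" "0 \<le> l * c + (1 - l) * d"
    using assms(1) by (auto simp: nonneg_weights_def)
  let ?u = "t * a + (1 - t) * c" and ?v = "t * b + (1 - t) * d"
  have "0 \<le> t * (l * a + (1 - l) * b) + (1 - t) * (l * c + (1 - l) * d)"
    using l t by (intro add_nonneg_nonneg) (rule mult_nonneg_nonneg; simp)+
  also have "\<dots> = l * ?u + (1 - l) * ?v"
    by (simp add: algebra_simps)
  also have "\<dots> \<le> l * max ?u ?v + (1 - l) * max ?u ?v"
    using l(1) by (intro add_mono mult_left_mono) auto
  also have "\<dots> = max ?u ?v"
    by (simp add: algebra_simps)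
  finally show ?thesis .
qed

text \<open>The weight t = (d - c) / D, with D = (a - b) + (d - c), makes both combinations equal to
  (a d - b c) / D, so a d \<ge> b c; then the zero -b / (a - b) of the first combination is good
  for both.\<close>

lemma nonneg_weights_meet_crossing:
  fixes a b c d :: real
  assumes ab: "b < 0" "0 \<le> a" and cd: "c < 0" "0 \<le> d"
    and H: "\<forall>t\<in>{0..1}. 0 \<le> max (t * a + (1 - t) * c) (t * b + (1 - t) * d)"
  shows "nonneg_weights a b \<inter> nonneg_weights c d \<noteq> {}"
proof -
  define D where "D = (a - b) + (d - c)"
  have "D > 0" using ab cd by (simp add: D_def)
  define t where "t = (d - c) / D"
  have t01: "t \<in> {0..1}" using ab cd \<open>D > 0\<close> by (simp add: t_def D_def field_simps)
  have "1 - t = (a - b) / D"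
    using \<open>D > 0\<close> by (simp add: t_def D_def field_simps)
  then have "t * a + (1 - t) * c = ((d - c) * a + (a - b) * c) / D"
    and "t * b + (1 - t) * d = ((d - c) * b + (a - b) * d) / D"
    by (simp_all add: t_def add_divide_distrib)
  moreover have "(d - c) * a + (a - b) * c = a * d - b * c"
    and "(d - c) * b + (a - b) * d = a * d - b * c"
    by (simp_all add: algebra_simps)
  ultimately have "0 \<le> (a * d - b * c) / D"
    using bspec[OF H t01] by simp
  then have det: "b * c \<le> a * d"
    using \<open>D > 0\<close> by (simp add: zero_le_divide_iff)
  define l where "l = - b / (a - b)"
  have "a - b > 0" using ab by simp
  then have "l \<in> {0..1}" "l * a + (1 - l) * b = 0"
    and "l * c + (1 - l) * d = (a * d - b * c) / (a - b)"
    using ab by (simp_all add: l_def divide_simps)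
  then have "l \<in> nonneg_weights a b \<inter> nonneg_weights c d"
    using \<open>a - b > 0\<close> det by (simp add: nonneg_weights_def)
  then show ?thesis by blast
qed

lemma nonneg_weights_meet_iff_max_nonneg:
  fixes a b c d :: real
  shows "nonneg_weights a b \<inter> nonneg_weights c d \<noteq> {}
    \<longleftrightarrow> (\<forall>t\<in>{0..1}. 0 \<le> max (t * a + (1 - t) * c) (t * b + (1 - t) * d))"
    (is "_ \<longleftrightarrow> ?H a b c d")
proof
  assume H: "?H a b c d"
  have H': "?H c d a b"
  proof
    fix t :: real
    assume "t \<in> {0..1}"
    then have "1 - t \<in> {0..1}" by simp
    then show "0 \<le> max (t * c + (1 - t) * a) (t * d + (1 - t) * b)"
      using bspec[OF H \<open>1 - t \<in> {0..1}\<close>] by (simp add: add.commute)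
  qed
  have "0 \<le> max a b" "0 \<le> max c d"
    using bspec[OF H, of 1] bspec[OF H, of 0] by simp_all
  moreover have "1 \<in> nonneg_weights a b \<inter> nonneg_weights c d" if "0 \<le> a" "0 \<le> c"
    using that by (simp add: nonneg_weights_def)
  moreover have "0 \<in> nonneg_weights a b \<inter> nonneg_weights c d" if "0 \<le> b" "0 \<le> d"
    using that by (simp add: nonneg_weights_def)
  moreover have "nonneg_weights a b \<inter> nonneg_weights c d \<noteq> {}"
    if "b < 0" "0 \<le> a" "c < 0" "0 \<le> d"
    using nonneg_weights_meet_crossing[OF that H] .
  moreover have "nonneg_weights a b \<inter> nonneg_weights c d \<noteq> {}"
    if "d < 0" "0 \<le> c" "a < 0" "0 \<le> b"
    using nonneg_weights_meet_crossing[OF that H'] by blast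
  ultimately show "nonneg_weights a b \<inter> nonneg_weights c d \<noteq> {}"
    by (cases "0 \<le> a"; cases "0 \<le> b"; cases "0 \<le> c"; cases "0 \<le> d") auto
qed (use nonneg_weights_meet_max_nonneg in blast)

theorem corollary2p3:
  fixes X :: "'a set" and f g :: "'a \<Rightarrow> real"
  assumes "X \<noteq> {}"
  shows "(\<exists>l\<in>{0..1::real}. \<forall>x\<in>X. 0 \<le> l * f x + (1 - l) * g x)
     \<longleftrightarrow> (\<forall>x\<in>X. \<forall>y\<in>X. \<forall>t\<in>{0..1::real}.
            0 \<le> max (t * f x + (1 - t) * f y) (t * g x + (1 - t) * g y))"
proof -
  let ?S = "\<lambda>x. nonneg_weights (f x) (g x)"
  have "(\<exists>l\<in>{0..1::real}. \<forall>x\<in>X. 0 \<le> l * f x + (1 - l) * g x) \<longleftrightarrow> (\<Inter>x\<in>X. ?S x) \<noteq> {}"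
    using assms by (auto simp: nonneg_weights_def)
  also have "\<dots> \<longleftrightarrow> (\<forall>x\<in>X. \<forall>y\<in>X. ?S x \<inter> ?S y \<noteq> {})"
    using Helly_real_intervals[OF assms, of ?S]
    by (auto simp: compact_nonneg_weights is_interval_nonneg_weights)
  also have "\<dots> \<longleftrightarrow> (\<forall>x\<in>X. \<forall>y\<in>X. \<forall>t\<in>{0..1::real}.
            0 \<le> max (t * f x + (1 - t) * f y) (t * g x + (1 - t) * g y))"
    by (simp add: nonneg_weights_meet_iff_max_nonneg)
  finally show ?thesis .
qed

end
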